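(* Let $\mu > 1$ and let $H : (0,\infty) \to (0,\infty)$ be a measurable function such that $$\eta(t) = \inf_{(t/\mu,\, t\mu)} H > 0 \quad \text{for all } t \in (0,\infty)$$ and $$\int_1^\infty (\eta(t)\,t)^{-1/4}\,dt < \infty.$$ Then there exists an infinitely smooth function $h : (0,\infty) \to (0,\infty)$ such that: 1) $h(t) \le H(t)$ for all $t \in (0,\infty)$; 2) $h(t_2) \ge h(t_1)$ for all $t_2 \ge t_1 > 0$; 3) for every real $\alpha > 0$ there is a constant $\beta > 0$, depending only on $\alpha$ and $\mu$, such that $h(\alpha t) \le \beta h(t)$ for all $t \ge 2$; 4) $\int_1^\infty (h(t)\,t)^{-1/4}\,dt < \infty$. *)

theory Defs
  imports "HOL-Analysis.Analysis"
begin

definition smooth_on :: "real set \<Rightarrow> (real \<Rightarrow> real) \<Rightarrow> bool" where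
  "smooth_on S f \<longleftrightarrow> (\<forall>n. \<forall>x\<in>S. ((deriv ^^ n) f) differentiable (at x))"

definition eta :: "real \<Rightarrow> (real \<Rightarrow> real) \<Rightarrow> real \<Rightarrow> real" where
  "eta \<mu> H t = Inf (H ` {t/\<mu> <..< t*\<mu>})"

end

theory Submission
  imports Defs "HOL-Complex_Analysis.Complex_Analysis"
begin

(* With nu = sqrt mu, every point s of a block [nu^j, nu^(j+1)] has the whole block inside
   (s/mu, s mu), so eta s bounds H from below on that block. Integrability of (eta t t)^(-1/4)
   yields sample values L_j <= H on block j with sum_j nu^j (L_j nu^j)^(-1/4) finite.
   Convolving this sequence with the kernel nu^(-|k-j|/4) gives weights e_k that are at most
   L_j up to a factor geometric in |k - j|, with the same summability. The series
   P t = sum_k e_k psi (t / nu^k), psi w = (w^2 / (1 + w^2))^3, is then increasing, at most a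
   constant times L_j and at least e_j / 8 on block j, and P (a t) <= a^6 P t for a >= 1.
   Near 0 it is damped by exp (- rho (1/t)), where rho x = sum_m g_m (x / nu^m)^(n_m) has
   nonnegative coefficients g_m chosen large enough for the blocks [nu^(-m-1), nu^(-m)] and
   exponents n_m large enough to make rho entire and rho (1/2) <= 2. Both series extend
   holomorphically to the right half-plane, so h t = exp (- rho (1/t)) P t is smooth. *)

definition psi :: "'a::real_normed_field \<Rightarrow> 'a" where
  "psi w = (w^2 / (1 + w^2))^3"

lemma psi_of_real: "psi (of_real x) = of_real (psi x)"
  by (simp add: psi_def)

lemma psi_nonneg: "0 \<le> psi (x::real)"
  by (simp add: psi_def)

lemma psi_pos: "x \<noteq> 0 \<Longrightarrow> 0 < psi (x::real)"
  by (simp add: psi_def add_pos_nonneg)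

lemma psi_le_one: "psi (x::real) \<le> 1"
  by (simp add: psi_def power_le_one add_pos_nonneg)

lemma psi_le_power6: "psi (x::real) \<le> x^6"
proof -
  have "x^2 / (1 + x^2) \<le> x^2"
    by (simp add: divide_le_eq add_pos_nonneg algebra_simps)
  then have "psi x \<le> (x^2)^3"
    unfolding psi_def by (intro power_mono) auto
  then show ?thesis by (simp flip: power_mult)
qed

lemma psi_mono:
  fixes x y :: real
  assumes "0 \<le> x" "x \<le> y"
  shows "psi x \<le> psi y"
proof -
  have "x^2 \<le> y^2" using assms by (simp add: power_mono)
  then have "x^2 / (1 + x^2) \<le> y^2 / (1 + y^2)"
    by (simp add: divide_simps add_pos_nonneg) (simp add: algebra_simps)
  then show ?thesis unfolding psi_def by (intro power_mono) auto
qed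

lemma psi_ge_one_eighth: "1 \<le> (x::real) \<Longrightarrow> 1/8 \<le> psi x"
  using psi_mono[of 1 x] by (simp add: psi_def power_divide)

lemma psi_scale_le:
  fixes a x :: real
  assumes "1 \<le> a"
  shows "psi (a * x) \<le> a^6 * psi x"
proof -
  have "x^2 \<le> (a * x)^2"
    using assms by (simp add: power_mult_distrib mult_le_cancel_right1 one_le_power)
  then have "(a * x)^2 / (1 + (a * x)^2) \<le> a^2 * (x^2 / (1 + x^2))"
    by (simp add: power_mult_distrib divide_simps add_pos_nonneg mult_left_mono)
  then have "psi (a * x) \<le> (a^2 * (x^2 / (1 + x^2)))^3"
    unfolding psi_def by (intro power_mono) auto
  also have "\<dots> = a^6 * psi x"
    unfolding psi_def power_mult_distrib power_mult[symmetric] by simp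
  finally show ?thesis .
qed

lemma norm_psi_le:
  fixes w :: "'a::real_normed_field"
  assumes "norm w \<le> 1/2"
  shows "norm (psi w) \<le> 3 * norm w ^ 6"
proof -
  have "norm w ^ 2 \<le> 1/4"
    using power_mono[OF assms, of 2] by (simp add: power2_eq_square)
  moreover have "1 - norm w ^ 2 \<le> norm (1 + w^2)"
    using norm_triangle_ineq2[of 1 "- (w^2)"] by (simp add: norm_power)
  ultimately have "3/4 \<le> norm (1 + w^2)" by linarith
  then have "norm (w^2 / (1 + w^2)) \<le> norm w ^ 2 / (3/4)"
    unfolding norm_divide norm_power by (intro divide_left_mono) auto
  then have "norm (psi w) \<le> (4/3 * norm w ^ 2)^3"
    unfolding psi_def norm_power by (intro power_mono) auto
  also have "\<dots> = 64/27 * norm w ^ 6"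
    unfolding power_mult_distrib power_mult[symmetric] by (simp add: power_divide)
  also have "\<dots> \<le> 3 * norm w ^ 6" by simp
  finally show ?thesis .
qed

lemma psi_holomorphic: "psi holomorphic_on {z. 0 < Re z}"
proof -
  have "1 + z^2 \<noteq> 0" if "0 < Re z" for z :: complex
  proof
    assume "1 + z^2 = 0"
    then have "(z - \<i>) * (z + \<i>) = 0" by (simp add: algebra_simps power2_eq_square)
    then have "z = \<i> \<or> z = - \<i>" by (simp add: eq_neg_iff_add_eq_0)
    then show False using that by auto
  qed
  then show ?thesis unfolding psi_def by (auto intro!: holomorphic_intros)
qed

lemma sum_power_inj_le:
  fixes r :: real
  assumes "0 \<le> r" "r < 1" "finite A" "inj_on f A"
  shows "(\<Sum>k\<in>A. r ^ f k) \<le> 1 / (1 - r)"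
proof -
  obtain M where M: "f ` A \<subseteq> {..<M}"
    using assms(3) finite_nat_iff_bounded by blast
  have "(\<Sum>k\<in>A. r ^ f k) = (\<Sum>m\<in>f ` A. r ^ m)"
    using assms(4) by (simp add: sum.reindex)
  also have "\<dots> \<le> (\<Sum>m<M. r ^ m)"
    using M assms(1) by (intro sum_mono2) auto
  also have "\<dots> = (1 - r ^ M) / (1 - r)"
    using assms(2) by (simp add: sum_gp_strict)
  also have "\<dots> \<le> 1 / (1 - r)"
    using assms(1,2) by (intro divide_right_mono) auto
  finally show ?thesis .
qed

(* (j - k) + (k - j) is |j - k|: one of the two truncated differences vanishes. *)
lemma sum_two_sided_geometric_le:
  fixes r :: real
  assumes "0 \<le> r" "r < 1"
  shows "(\<Sum>k<N. r ^ ((j - k) + (k - j))) \<le> 2 / (1 - r)"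
proof -
  have "(\<Sum>k<N. r ^ ((j - k) + (k - j))) = (\<Sum>k<N. if k \<le> j then r ^ (j - k) else r ^ (k - j))"
    by (intro sum.cong) auto
  also have "\<dots> = (\<Sum>k\<in>{..<N} \<inter> {k. k \<le> j}. r ^ (j - k)) + (\<Sum>k\<in>{..<N} \<inter> - {k. k \<le> j}. r ^ (k - j))"
    by (rule sum.If_cases) simp
  also have "\<dots> \<le> 1 / (1 - r) + 1 / (1 - r)"
    using assms by (intro add_mono sum_power_inj_le) (auto simp: inj_on_def)
  finally show ?thesis by simp
qed

lemma summable_two_sided_geometric_convolution:
  fixes b :: "nat \<Rightarrow> real"
  assumes b: "summable b" "\<And>j. 0 \<le> b j" and r: "0 \<le> r" "r < 1"
  shows "summable (\<lambda>k. \<Sum>j. b j * r ^ ((j - k) + (k - j)))"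
proof (rule summableI_nonneg_bounded)
  have row: "summable (\<lambda>j. b j * r ^ ((j - k) + (k - j)))" for k
    using b r by (intro summable_comparison_test'[OF b(1)])
      (auto simp: abs_mult mult_left_le power_le_one)
  show "0 \<le> (\<Sum>j. b j * r ^ ((j - k) + (k - j)))" for k
    using b r by (intro suminf_nonneg row) auto
  fix N
  have "(\<Sum>k<N. \<Sum>j. b j * r ^ ((j - k) + (k - j))) = (\<Sum>j. b j * (\<Sum>k<N. r ^ ((j - k) + (k - j))))"
    by (simp add: suminf_sum row sum_distrib_left)
  also have "\<dots> \<le> (\<Sum>j. b j * (2 / (1 - r)))"
    using b r by (intro suminf_le summable_sum summable_mult2 row mult_left_mono sum_two_sided_geometric_le)
      (auto simp: sum_distrib_left intro!: summable_sum row)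
  finally show "(\<Sum>k<N. \<Sum>j. b j * r ^ ((j - k) + (k - j))) \<le> (\<Sum>j. b j * (2 / (1 - r)))" .
qed

lemma holomorphic_on_suminf:
  fixes f :: "nat \<Rightarrow> complex \<Rightarrow> complex"
  assumes S: "open S" and hol: "\<And>n. f n holomorphic_on S"
    and dom: "\<And>R. \<exists>M. summable M \<and> (\<forall>\<^sub>F n in sequentially. \<forall>w. norm w \<le> R \<longrightarrow> norm (f n w) \<le> M n)"
  shows "(\<lambda>z. \<Sum>n. f n z) holomorphic_on S"
proof (rule holomorphic_uniform_sequence[OF S, where f = "\<lambda>n z. \<Sum>i<n. f i z"])
  show "(\<lambda>z. \<Sum>i<n. f i z) holomorphic_on S" for n
    by (intro holomorphic_on_sum hol)
  fix x assume "x \<in> S"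
  then obtain d where d: "d > 0" "cball x d \<subseteq> S"
    using S open_contains_cball by blast
  obtain M where M: "summable M" "\<forall>\<^sub>F n in sequentially. \<forall>w. norm w \<le> norm x + d \<longrightarrow> norm (f n w) \<le> M n"
    using dom by blast
  have "norm z \<le> norm x + d" if "z \<in> cball x d" for z
    using that norm_triangle_ineq2[of z x] by (auto simp: dist_norm norm_minus_commute)
  with M(2) have "\<forall>\<^sub>F n in sequentially. \<forall>z\<in>cball x d. norm (f n z) \<le> M n"
    by (auto elim!: eventually_mono)
  then show "\<exists>d>0. cball x d \<subseteq> S \<and> uniform_limit (cball x d) (\<lambda>n z. \<Sum>i<n. f i z) (\<lambda>z. \<Sum>n. f n z) sequentially"
    using d M(1) Weierstrass_m_test_ev by blast
qed

lemma has_real_derivative_Re_of_real: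
  assumes "(G has_field_derivative G') (at (complex_of_real t))"
  shows "((\<lambda>s. Re (G (of_real s))) has_real_derivative Re G') (at t)"
proof -
  have "((\<lambda>s. G (of_real s)) has_vector_derivative G') (at t)"
    using assms by (rule has_vector_derivative_real_field)
  from bounded_linear.has_derivative[OF bounded_linear_Re this[unfolded has_vector_derivative_def]]
  show ?thesis by (simp add: has_field_derivative_def mult.commute[of _ "Re _"])
qed

lemma smooth_on_Re_of_real_holomorphic:
  assumes hol: "F holomorphic_on \<Omega>" and "open \<Omega>" and S: "open S" "complex_of_real ` S \<subseteq> \<Omega>"
  shows "smooth_on S (\<lambda>t. Re (F (of_real t)))"
proof -
  have der: "((\<lambda>s. Re ((deriv ^^ n) F (of_real s))) has_real_derivative
               Re ((deriv ^^ Suc n) F (of_real t))) (at t)" if "t \<in> S" for n t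
    using that S holomorphic_higher_deriv[OF hol \<open>open \<Omega>\<close>, of n] \<open>open \<Omega>\<close>
    by (intro has_real_derivative_Re_of_real) (auto intro!: holomorphic_derivI)
  have eq: "\<forall>t\<in>S. (deriv ^^ n) (\<lambda>t. Re (F (of_real t))) t = Re ((deriv ^^ n) F (of_real t))" for n
  proof (induction n)
    case (Suc n)
    show ?case
    proof
      fix t assume t: "t \<in> S"
      have "\<forall>\<^sub>F s in nhds t. (deriv ^^ n) (\<lambda>t. Re (F (of_real t))) s = Re ((deriv ^^ n) F (of_real s))"
        using eventually_nhds_in_open[OF S(1) t] Suc.IH by (auto elim!: eventually_mono)
      then show "(deriv ^^ Suc n) (\<lambda>t. Re (F (of_real t))) t = Re ((deriv ^^ Suc n) F (of_real t))"
        using DERIV_imp_deriv[OF der[OF t]] by (simp add: deriv_cong_ev)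
    qed
  qed simp
  show ?thesis
    unfolding smooth_on_def
  proof (intro allI ballI)
    fix n t assume t: "t \<in> S"
    have "\<forall>\<^sub>F s in nhds t. (deriv ^^ n) (\<lambda>t. Re (F (of_real t))) s = Re ((deriv ^^ n) F (of_real s))"
      using eventually_nhds_in_open[OF S(1) t] eq[of n] by (auto elim!: eventually_mono)
    then have "((deriv ^^ n) (\<lambda>t. Re (F (of_real t))) has_real_derivative Re ((deriv ^^ Suc n) F (of_real t))) (at t)"
      using der[OF t] by (subst DERIV_cong_ev[OF refl _ refl]) auto
    then show "(deriv ^^ n) (\<lambda>t. Re (F (of_real t))) differentiable (at t)"
      using real_differentiable_def by blast
  qed
qed

lemma geometric_block_exists:
  fixes \<nu> x :: real
  assumes "\<nu> > 1" "1 \<le> x"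
  obtains j where "\<nu>^j \<le> x" "x \<le> \<nu>^Suc j"
proof -
  obtain N where "x < \<nu>^N"
    using real_arch_pow[OF assms(1)] by blast
  then obtain j where "\<forall>i\<le>j. \<not> x < \<nu>^i" "x < \<nu>^Suc j"
    using ex_least_nat_less[of "\<lambda>i. x < \<nu>^i" N] assms(2) by auto
  then show ?thesis using that[of j] by (simp add: not_less less_imp_le)
qed

lemma eta_le_on_block:
  fixes \<nu> :: real
  assumes \<nu>: "\<nu> > 1" and H: "\<forall>t>0. H t > 0" and a: "0 < a"
    and s: "a \<le> s" "s \<le> a * \<nu>" and t: "a \<le> t" "t \<le> a * \<nu>"
  shows "eta (\<nu>^2) H s \<le> H t"
  unfolding eta_def
proof (rule cInf_lower)
  have "s / \<nu>^2 \<le> a * \<nu> / \<nu>^2"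
    using s \<nu> by (intro divide_right_mono) auto
  also have "\<dots> < a"
    using a \<nu> by (simp add: power2_eq_square field_simps)
  finally have "s / \<nu>^2 < t" using t by linarith
  moreover have "t < s * \<nu>^2"
  proof -
    have "a * \<nu> < a * \<nu>^2"
      using a \<nu> by (simp add: power2_eq_square)
    also have "\<dots> \<le> s * \<nu>^2"
      using s by (simp add: mult_right_mono)
    finally show ?thesis using t by linarith
  qed
  ultimately show "H t \<in> H ` {s / \<nu>^2 <..< s * \<nu>^2}" by auto
  have "0 < s / \<nu>^2" using a s \<nu> by simp
  then show "bdd_below (H ` {s / \<nu>^2 <..< s * \<nu>^2})"
    using H by (intro bdd_belowI[of _ 0]) (auto intro: less_imp_le less_trans)
qed

lemma exists_below_average:
  fixes f :: "real \<Rightarrow> real"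
  assumes "a \<le> b" and avg: "(\<integral>\<^sup>+x. ennreal (f x) * indicator {a..<b} x \<partial>lborel) < ennreal (c * (b - a))"
  shows "\<exists>t\<in>{a..<b}. f t < c"
proof (rule ccontr)
  assume "\<not> ?thesis"
  then have "(\<integral>\<^sup>+x. ennreal c * indicator {a..<b} x \<partial>lborel) \<le> (\<integral>\<^sup>+x. ennreal (f x) * indicator {a..<b} x \<partial>lborel)"
    by (intro nn_integral_mono) (auto simp: ennreal_leI not_less split: split_indicator)
  moreover have "(\<integral>\<^sup>+x. ennreal c * indicator {a..<b} x \<partial>lborel) = ennreal (c * (b - a))"
    using \<open>a \<le> b\<close> by (simp add: nn_integral_cmult_indicator ennreal_mult'')
  ultimately show False using avg by simp
qed

lemma summable_block_integrals:
  fixes f :: "real \<Rightarrow> real" and \<nu> :: real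
  assumes \<nu>: "\<nu> > 1" and int: "set_integrable lborel {1..} f"
  obtains a where "\<And>k. (\<integral>\<^sup>+x. ennreal (f x) * indicator {\<nu>^k..<\<nu>^Suc k} x \<partial>lborel) = ennreal (a k)"
    "\<And>k. 0 \<le> a k" "summable a"
proof -
  define W where "W k = {\<nu>^k..<\<nu>^Suc k}" for k
  have disj: "disjoint_family W"
  proof (auto simp: disjoint_family_on_def)
    fix k l x assume "k \<noteq> l" "x \<in> W k" "x \<in> W l"
    then have "\<nu>^l < \<nu>^Suc k" "\<nu>^k < \<nu>^Suc l" by (auto simp: W_def)
    then have "l < Suc k" "k < Suc l" using power_less_imp_less_exp[OF \<nu>] by blast+
    with \<open>k \<noteq> l\<close> show False by simp
  qed
  define f' where "f' x = indicator {1..} x *\<^sub>R f x" for x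
  have "integrable lborel f'"
    using int unfolding set_integrable_def f'_def .
  then have meas: "f' \<in> borel_measurable lborel" and fin: "(\<integral>\<^sup>+x. ennreal (norm (f' x)) \<partial>lborel) < \<infinity>"
    using integrable_iff_bounded by blast+
  define I where "I k = (\<integral>\<^sup>+x. ennreal (f x) * indicator (W k) x \<partial>lborel)" for k
  have I_eq: "I k = (\<integral>\<^sup>+x. ennreal (f' x) * indicator (W k) x \<partial>lborel)" for k
  proof -
    have "1 \<le> \<nu>^k" using \<nu> by (intro one_le_power) simp
    then show ?thesis
      unfolding I_def by (intro nn_integral_cong) (auto simp: f'_def W_def split: split_indicator)
  qed
  have "(\<Sum>k. I k) = (\<integral>\<^sup>+x. (\<Sum>k. ennreal (f' x) * indicator (W k) x) \<partial>lborel)"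
    unfolding I_eq by (rule nn_integral_suminf[symmetric]) (use meas in \<open>simp add: W_def\<close>)
  also have "\<dots> = (\<integral>\<^sup>+x. ennreal (f' x) * indicator (\<Union>(range W)) x \<partial>lborel)"
    by (simp add: suminf_indicator[OF disj])
  also have "\<dots> \<le> (\<integral>\<^sup>+x. ennreal (norm (f' x)) \<partial>lborel)"
    by (intro nn_integral_mono) (auto simp: indicator_def intro: ennreal_leI)
  finally have sum_I: "(\<Sum>k. I k) < \<infinity>" using fin by simp
  define a where "a k = enn2real (I k)" for k
  have I_a: "I k = ennreal (a k)" for k
    using sum_I ennreal_suminf_lessD[of I] by (auto simp: a_def less_top ennreal_enn2real_if)
  have a_nonneg: "0 \<le> a k" for k by (simp add: a_def)
  have "summable a"
    using sum_I by (intro summable_suminf_not_top a_nonneg) (simp add: I_a[symmetric])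
  then show ?thesis
    using that a_nonneg I_a by (simp add: I_def W_def)
qed

lemma summable_block_samples:
  fixes f :: "real \<Rightarrow> real" and \<nu> :: real
  assumes \<nu>: "\<nu> > 1" and int: "set_integrable lborel {1..} f" and nn: "\<And>t. 1 \<le> t \<Longrightarrow> 0 \<le> f t"
  obtains s where "\<And>k. \<nu>^k \<le> s k" "\<And>k. s k \<le> \<nu>^Suc k" "summable (\<lambda>k. \<nu>^k * f (s k))"
proof -
  obtain a where I_a: "\<And>k. (\<integral>\<^sup>+x. ennreal (f x) * indicator {\<nu>^k..<\<nu>^Suc k} x \<partial>lborel) = ennreal (a k)"
    and a_nonneg: "\<And>k. 0 \<le> a k" and summable_a: "summable a"
    using summable_block_integrals[OF \<nu> int] by blast
  define c where "c k = (a k + (1/\<nu>)^k) / (\<nu>^k * (\<nu> - 1))" for k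
  have "\<exists>t\<in>{\<nu>^k..<\<nu>^Suc k}. f t < c k" for k
  proof (rule exists_below_average)
    show "\<nu>^k \<le> \<nu>^Suc k" using \<nu> by simp
    have "c k * (\<nu>^Suc k - \<nu>^k) = a k + (1/\<nu>)^k"
      using \<nu> by (simp add: c_def field_simps)
    then have "a k < c k * (\<nu>^Suc k - \<nu>^k)"
      using \<nu> by simp
    then show "(\<integral>\<^sup>+x. ennreal (f x) * indicator {\<nu>^k..<\<nu>^Suc k} x \<partial>lborel) < ennreal (c k * (\<nu>^Suc k - \<nu>^k))"
      unfolding I_a using a_nonneg[of k] by (intro ennreal_lessI) auto
  qed
  then obtain s where s: "\<And>k. s k \<in> {\<nu>^k..<\<nu>^Suc k}" "\<And>k. f (s k) < c k"
    by metis
  have major: "summable (\<lambda>k. (a k + (1/\<nu>)^k) / (\<nu> - 1))"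
    using \<nu> by (intro summable_divide summable_add summable_a summable_geometric) auto
  have bound: "norm (\<nu>^k * f (s k)) \<le> (a k + (1/\<nu>)^k) / (\<nu> - 1)" for k
  proof -
    have "1 \<le> \<nu>^k" using \<nu> by (intro one_le_power) simp
    then have "0 \<le> f (s k)"
      using s(1)[of k] by (intro nn) simp
    then have "norm (\<nu>^k * f (s k)) \<le> \<nu>^k * c k"
      using s(2)[of k] \<nu> by (simp add: mult_left_mono less_imp_le)
    also have "\<nu>^k * c k = (a k + (1/\<nu>)^k) / (\<nu> - 1)"
      using \<nu> by (simp add: c_def)
    finally show ?thesis .
  qed
  have "summable (\<lambda>k. \<nu>^k * f (s k))"
    by (rule summable_comparison_test_ev[OF always_eventually major]) (use bound in blast)
  moreover have "\<nu>^k \<le> s k" "s k \<le> \<nu>^Suc k" for k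
    using s(1)[of k] by auto
  ultimately show ?thesis using that by blast
qed

lemma nn_integral_block_steps_finite:
  fixes c :: "nat \<Rightarrow> real" and \<nu> :: real
  assumes \<nu>: "\<nu> > 1" and c: "\<And>j. 0 \<le> c j" and summable: "summable (\<lambda>j. \<nu>^j * c j)"
  shows "(\<integral>\<^sup>+x. (\<Sum>j. ennreal (c j) * indicator {\<nu>^j..\<nu>^Suc j} x) \<partial>lborel) < \<infinity>"
proof -
  have "(\<integral>\<^sup>+x. (\<Sum>j. ennreal (c j) * indicator {\<nu>^j..\<nu>^Suc j} x) \<partial>lborel)
      = (\<Sum>j. \<integral>\<^sup>+x. ennreal (c j) * indicator {\<nu>^j..\<nu>^Suc j} x \<partial>lborel)"
    by (rule nn_integral_suminf) simp
  also have "\<dots> = (\<Sum>j. ennreal ((\<nu> - 1) * (\<nu>^j * c j)))"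
  proof (rule suminf_cong)
    fix j
    have "\<nu>^j \<le> \<nu>^Suc j" using \<nu> by simp
    then show "(\<integral>\<^sup>+x. ennreal (c j) * indicator {\<nu>^j..\<nu>^Suc j} x \<partial>lborel) = ennreal ((\<nu> - 1) * (\<nu>^j * c j))"
      using c[of j] by (simp add: nn_integral_cmult_indicator flip: ennreal_mult) (simp add: algebra_simps)
  qed
  also have "\<dots> = ennreal (\<Sum>j. (\<nu> - 1) * (\<nu>^j * c j))"
    using \<nu> c by (intro suminf_ennreal2 summable_mult summable) auto
  also have "\<dots> < \<infinity>" by simp
  finally show ?thesis .
qed

lemma set_integrable_of_block_bounds:
  fixes f :: "real \<Rightarrow> real" and c :: "nat \<Rightarrow> real" and \<nu> :: real
  assumes \<nu>: "\<nu> > 1" and cont: "continuous_on {1..} f" and nn: "\<And>x. 1 \<le> x \<Longrightarrow> 0 \<le> f x"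
    and bound: "\<And>j x. \<nu>^j \<le> x \<Longrightarrow> x \<le> \<nu>^Suc j \<Longrightarrow> f x \<le> c j"
    and summable: "summable (\<lambda>j. \<nu>^j * c j)"
  shows "set_integrable lborel {1..} f"
proof -
  have c_nonneg: "0 \<le> c j" for j
  proof -
    have "1 \<le> \<nu>^j" using \<nu> by (intro one_le_power) simp
    then have "0 \<le> f (\<nu>^j)" by (rule nn)
    moreover have "f (\<nu>^j) \<le> c j" using bound[of j "\<nu>^j"] \<nu> by simp
    ultimately show ?thesis by linarith
  qed
  define g where "g x = indicator {1..} x *\<^sub>R f x" for x
  have meas: "g \<in> borel_measurable lborel"
    unfolding g_def
    by (subst measurable_lborel2) (rule borel_measurable_continuous_on_indicator[OF _ cont], simp)
  have "ennreal (norm (g x)) \<le> (\<Sum>j. ennreal (c j) * indicator {\<nu>^j..\<nu>^Suc j} x)" for x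
  proof (cases "1 \<le> x")
    case True
    then obtain j where j: "\<nu>^j \<le> x" "x \<le> \<nu>^Suc j"
      using geometric_block_exists[OF \<nu>] by blast
    then have "ennreal (norm (g x)) \<le> ennreal (c j) * indicator {\<nu>^j..\<nu>^Suc j} x"
      using True bound[OF j] nn[OF True] by (simp add: g_def ennreal_leI)
    also have "\<dots> \<le> (\<Sum>j. ennreal (c j) * indicator {\<nu>^j..\<nu>^Suc j} x)"
      using sum_le_suminf[OF summableI, of "{j}"] by simp
    finally show ?thesis .
  qed (simp add: g_def)
  then have "(\<integral>\<^sup>+x. ennreal (norm (g x)) \<partial>lborel) < \<infinity>"
    using nn_integral_block_steps_finite[OF \<nu> c_nonneg summable]
    by (meson le_less_trans nn_integral_mono)
  then show ?thesis
    unfolding set_integrable_def g_def[symmetric] by (rule integrableI_bounded[OF meas])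
qed

lemma powr_neg_quarter_power4: "0 < (x::real) \<Longrightarrow> (x powr (-1/4))^4 = 1 / x"
  using powr_power[of x "-1/4" 4] by (simp only: powr_neg_one) simp

lemma quarter_weight_power4:
  fixes \<nu> x :: real
  assumes "\<nu> > 1" "x > 0"
  shows "((x * \<nu>^k) powr (-1/4) * \<nu>^k)^4 = \<nu>^(3*k) / x"
proof -
  have "0 < x * \<nu>^k" using assms by simp
  then have "((x * \<nu>^k) powr (-1/4) * \<nu>^k)^4 = \<nu>^(4*k) / (x * \<nu>^k)"
    unfolding power_mult_distrib powr_neg_quarter_power4[OF \<open>0 < x * \<nu>^k\<close>]
    by (simp flip: power_mult add: mult.commute)
  also have "\<nu>^(4*k) = \<nu>^(3*k) * \<nu>^k"
    by (simp flip: power_add)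
  finally show ?thesis
    using assms by simp
qed

lemma quarter_weight_le_imp:
  fixes \<nu> x y :: real
  assumes \<nu>: "\<nu> > 1" and x: "x > 0" and y: "y > 0"
    and le: "(y * \<nu>^j) powr (-1/4) * \<nu>^j * (\<nu> powr (-1/4))^d \<le> (x * \<nu>^k) powr (-1/4) * \<nu>^k"
  shows "x * \<nu>^(3*j) \<le> y * \<nu>^(3*k) * \<nu>^d"
proof -
  have "((\<nu> powr (-1/4))^d)^4 = ((\<nu> powr (-1/4))^4)^d"
    by (simp only: power_mult[symmetric] mult.commute)
  also have "\<dots> = 1 / \<nu>^d"
    using powr_neg_quarter_power4[of \<nu>] \<nu> by (simp add: power_one_over)
  finally have "\<nu>^(3*j) / y / \<nu>^d = ((y * \<nu>^j) powr (-1/4) * \<nu>^j * (\<nu> powr (-1/4))^d)^4"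
    unfolding power_mult_distrib[of _ "(\<nu> powr (-1/4))^d"] quarter_weight_power4[OF \<nu> y] by simp
  also have "\<dots> \<le> ((x * \<nu>^k) powr (-1/4) * \<nu>^k)^4"
    using le \<nu> by (intro power_mono) auto
  also have "\<dots> = \<nu>^(3*k) / x"
    by (rule quarter_weight_power4[OF \<nu> x])
  finally show ?thesis
    using \<nu> x y by (simp add: field_simps)
qed

lemma distance_weighted_bound_cases:
  fixes \<nu> x y :: real
  assumes \<nu>: "\<nu> > 1" and x: "x > 0"
    and bound: "x * \<nu>^(3*j) \<le> y * \<nu>^(3*k) * \<nu>^((j - k) + (k - j))"
  shows "k \<le> j \<Longrightarrow> x * \<nu>^(j - k) \<le> y" and "j < k \<Longrightarrow> x \<le> y * \<nu>^(4 * (k - j))"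
proof -
  assume "k \<le> j"
  then obtain d where j: "j = k + d" using le_Suc_ex by blast
  have "\<nu>^(3*j) = \<nu>^(2*d) * (\<nu>^(3*k) * \<nu>^d)"
    by (simp add: j flip: power_add) (simp add: algebra_simps)
  then have "x * \<nu>^(2*d) * (\<nu>^(3*k) * \<nu>^d) \<le> y * (\<nu>^(3*k) * \<nu>^d)"
    using bound by (simp add: j mult_ac)
  then have "x * \<nu>^(2*d) \<le> y"
    using \<nu> by (simp add: mult_le_cancel_right_pos)
  moreover have "x * \<nu>^d \<le> x * \<nu>^(2*d)"
    using \<nu> x by (intro mult_left_mono power_increasing) auto
  ultimately show "x * \<nu>^(j - k) \<le> y" by (simp add: j)
next
  assume "j < k"
  then obtain d where k: "k = j + d" using le_Suc_ex[of j k] by auto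
  have "\<nu>^(3*k) * \<nu>^((j - k) + (k - j)) = \<nu>^(4*d) * \<nu>^(3*j)"
    by (simp add: k flip: power_add)
  then have "x * \<nu>^(3*j) \<le> y * \<nu>^(4*d) * \<nu>^(3*j)"
    using bound by (simp add: mult_ac)
  then show "x \<le> y * \<nu>^(4 * (k - j))"
    using \<nu> by (simp add: k)
qed

lemma regular_minorant_exists:
  fixes \<nu> :: real and L :: "nat \<Rightarrow> real"
  assumes \<nu>: "\<nu> > 1" and L: "\<And>j. L j > 0"
    and summable: "summable (\<lambda>j. (L j * \<nu>^j) powr (-1/4) * \<nu>^j)"
  obtains e where "\<And>k. e k > 0"
    "\<And>k j. k \<le> j \<Longrightarrow> e k * \<nu>^(j - k) \<le> L j"
    "\<And>k j. j < k \<Longrightarrow> e k \<le> L j * \<nu>^(4 * (k - j))"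
    "summable (\<lambda>k. (e k * \<nu>^k) powr (-1/4) * \<nu>^k)"
proof -
  define b where "b j = (L j * \<nu>^j) powr (-1/4) * \<nu>^j" for j
  have b_pos: "0 < b j" for j
    using L[of j] \<nu> by (simp add: b_def)
  define r where "r = \<nu> powr (-1/4)"
  have r: "0 < r" "r < 1" "r^4 = 1 / \<nu>"
    using \<nu> powr_neg_quarter_power4[of \<nu>] by (auto simp: r_def powr_less_one)
  (* a dominates every b j r^|k - j|, and e is chosen so that (e k nu^k)^(-1/4) nu^k = a k. *)
  define a where "a k = (\<Sum>j. b j * r ^ ((j - k) + (k - j)))" for k
  have "norm (b j * r ^ d) \<le> b j" for j d
    using b_pos[of j] r by (simp add: abs_mult mult_left_le power_le_one)
  then have row: "summable (\<lambda>j. b j * r ^ ((j - k) + (k - j)))" for k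
    by (intro summable_comparison_test_ev[OF always_eventually summable[folded b_def]]) blast
  have a_ge: "b j * r ^ ((j - k) + (k - j)) \<le> a k" for j k
    unfolding a_def using sum_le_suminf[OF row, of "{j}"] b_pos r by (simp add: less_imp_le)
  have a_pos: "0 < a k" for k
    using a_ge[of k k] b_pos[of k] by simp
  define e where "e k = \<nu>^(3*k) / a k ^ 4" for k
  have e_pos: "0 < e k" for k
    using \<nu> a_pos[of k] by (simp add: e_def)
  have e_weight: "(e k * \<nu>^k) powr (-1/4) * \<nu>^k = a k" for k
  proof (rule power_eq_imp_eq_base)
    show "((e k * \<nu>^k) powr (-1/4) * \<nu>^k)^4 = a k ^ 4"
      using quarter_weight_power4[OF \<nu> e_pos[of k], of k] \<nu> a_pos[of k] by (simp add: e_def)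
  qed (use a_pos[of k] \<nu> in auto)
  have "e k * \<nu>^(3*j) \<le> L j * \<nu>^(3*k) * \<nu>^((j - k) + (k - j))" for k j
    using a_ge[of j k] unfolding e_weight[symmetric] b_def r_def by (rule quarter_weight_le_imp[OF \<nu> e_pos L])
  note bounds = distance_weighted_bound_cases[OF \<nu> e_pos this]
  have "summable a"
    unfolding a_def using summable b_pos r
    by (intro summable_two_sided_geometric_convolution) (auto simp: b_def less_imp_le)
  then have "summable (\<lambda>k. (e k * \<nu>^k) powr (-1/4) * \<nu>^k)"
    unfolding e_weight .
  with e_pos bounds show ?thesis
    by (rule that)
qed

lemma eventually_le_power:
  fixes \<nu> Z :: real
  assumes "\<nu> > 1"
  shows "\<forall>\<^sub>F k in sequentially. Z \<le> \<nu>^k"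
proof -
  obtain N where "Z < \<nu>^N"
    using real_arch_pow[OF assms] by blast
  then have "Z \<le> \<nu>^k" if "N \<le> k" for k
    using power_increasing[OF that less_imp_le[OF assms]] by linarith
  then show ?thesis
    unfolding eventually_sequentially by blast
qed

definition psi_sum :: "real \<Rightarrow> (nat \<Rightarrow> real) \<Rightarrow> 'a::{real_normed_field,banach} \<Rightarrow> 'a" where
  "psi_sum \<nu> e w = (\<Sum>k. of_real (e k) * psi (w / of_real (\<nu>^k)))"

locale psi_series =
  fixes \<nu> :: real and e :: "nat \<Rightarrow> real" and C :: real
  assumes base_gt_1: "\<nu> > 1" and e_pos: "\<And>k. e k > 0" and e_le: "\<And>k. e k \<le> C * \<nu>^(4*k)"
begin

lemma norm_psi_term_le:
  fixes w :: "'a::real_normed_field"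
  assumes w: "norm w \<le> R" and k: "2 * R \<le> \<nu>^k"
  shows "norm (of_real (e k) * psi (w / of_real (\<nu>^k))) \<le> 3 * C * R^6 * (1 / \<nu>^2)^k"
proof -
  have \<nu>k: "0 < \<nu>^k" using base_gt_1 by simp
  have small: "norm (w / of_real (\<nu>^k)) \<le> R / \<nu>^k"
    using w \<nu>k base_gt_1 by (simp add: norm_divide norm_power divide_right_mono)
  also have "\<dots> \<le> 1/2"
    using k \<nu>k by (simp add: field_simps)
  finally have "norm (psi (w / of_real (\<nu>^k))) \<le> 3 * norm (w / of_real (\<nu>^k))^6"
    by (rule norm_psi_le)
  also have "\<dots> \<le> 3 * (R / \<nu>^k)^6"
    using small by (intro mult_left_mono power_mono) auto
  finally have "norm (psi (w / of_real (\<nu>^k))) \<le> 3 * (R / \<nu>^k)^6" .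
  then have "norm (of_real (e k) * psi (w / of_real (\<nu>^k))) \<le> C * \<nu>^(4*k) * (3 * (R / \<nu>^k)^6)"
    using e_le[of k] e_pos[of k] by (simp add: norm_mult) (intro mult_mono; simp)
  also have "\<dots> = 3 * C * R^6 * (1 / \<nu>^2)^k"
  proof -
    have "(\<nu>^k)^6 = \<nu>^(4*k) * (\<nu>^2)^k"
      by (simp flip: power_mult power_add) (simp add: mult.commute)
    then show ?thesis
      using \<nu>k by (simp add: power_divide power_one_over)
  qed
  finally show ?thesis .
qed

lemma psi_terms_dominated:
  "\<exists>M. summable M \<and> (\<forall>\<^sub>F k in sequentially.
     \<forall>w::'a::real_normed_field. norm w \<le> R \<longrightarrow> norm (of_real (e k) * psi (w / of_real (\<nu>^k))) \<le> M k)"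
proof (intro exI conjI)
  show "summable (\<lambda>k. 3 * C * R^6 * (1 / \<nu>^2)^k)"
    using base_gt_1 by (intro summable_mult summable_geometric) auto
  show "\<forall>\<^sub>F k in sequentially. \<forall>w::'a. norm w \<le> R \<longrightarrow>
          norm (of_real (e k) * psi (w / of_real (\<nu>^k))) \<le> 3 * C * R^6 * (1 / \<nu>^2)^k"
    using eventually_le_power[OF base_gt_1, of "2 * R"] by eventually_elim (use norm_psi_term_le in blast)
qed

lemma summable_psi_terms:
  "summable (\<lambda>k. of_real (e k) * psi (w / of_real (\<nu>^k)) :: 'a::{real_normed_field,banach})"
proof -
  obtain M where M: "summable M"
    "\<forall>\<^sub>F k in sequentially. \<forall>v::'a. norm v \<le> norm w \<longrightarrow> norm (of_real (e k) * psi (v / of_real (\<nu>^k))) \<le> M k"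
    using psi_terms_dominated by blast
  from M(2) have "\<forall>\<^sub>F k in sequentially. norm (of_real (e k) * psi (w / of_real (\<nu>^k))) \<le> M k"
    by eventually_elim blast
  then show ?thesis
    using M(1) by (rule summable_comparison_test_ev)
qed

lemma psi_sum_holomorphic: "psi_sum \<nu> e holomorphic_on {z. 0 < Re z}"
proof -
  have "(psi \<circ> (\<lambda>z. z / of_real (\<nu>^k))) holomorphic_on {z. 0 < Re z}" for k
    using base_gt_1 by (intro holomorphic_on_compose_gen[OF _ psi_holomorphic]) (auto intro!: holomorphic_intros)
  then have "(\<lambda>z. of_real (e k) * psi (z / of_real (\<nu>^k))) holomorphic_on {z. 0 < Re z}" for k
    by (intro holomorphic_on_mult holomorphic_on_const) (simp add: o_def)
  then have "(\<lambda>z. \<Sum>k. of_real (e k) * psi (z / of_real (\<nu>^k))) holomorphic_on {z. 0 < Re z}"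
    by (intro holomorphic_on_suminf open_halfspace_Re_gt psi_terms_dominated)
  then show ?thesis
    by (simp add: psi_sum_def[abs_def])
qed

lemma psi_sum_of_real: "psi_sum \<nu> e (complex_of_real t) = of_real (psi_sum \<nu> e t)"
  unfolding psi_sum_def
  using suminf_of_real[OF summable_psi_terms[of t], where 'a=complex]
  by (simp flip: psi_of_real)

lemma psi_sum_real: "psi_sum \<nu> e (t::real) = (\<Sum>k. e k * psi (t / \<nu>^k))"
  by (simp add: psi_sum_def)

lemma summable_psi_terms_real: "summable (\<lambda>k. e k * psi (t / \<nu>^k))"
  using summable_psi_terms[of t] by simp

lemma psi_sum_nonneg: "0 \<le> psi_sum \<nu> e (t::real)"
  unfolding psi_sum_real using e_pos
  by (intro suminf_nonneg summable_psi_terms_real) (simp add: psi_nonneg less_imp_le)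

lemma psi_term_le_psi_sum: "e k * psi (t / \<nu>^k) \<le> psi_sum \<nu> e (t::real)"
  unfolding psi_sum_real using sum_le_suminf[OF summable_psi_terms_real, of "{k}"] e_pos
  by (simp add: psi_nonneg less_imp_le)

lemma psi_sum_pos:
  assumes "(t::real) \<noteq> 0"
  shows "0 < psi_sum \<nu> e t"
proof -
  have "0 < e 0 * psi t"
    using e_pos[of 0] psi_pos[OF assms] by simp
  also have "\<dots> \<le> psi_sum \<nu> e t"
    using psi_term_le_psi_sum[of 0 t] by simp
  finally show ?thesis .
qed

lemma psi_sum_mono:
  fixes s t :: real
  assumes "0 \<le> s" "s \<le> t"
  shows "psi_sum \<nu> e s \<le> psi_sum \<nu> e t"
  unfolding psi_sum_real
proof (intro suminf_le summable_psi_terms_real)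
  fix k
  have "psi (s / \<nu>^k) \<le> psi (t / \<nu>^k)"
    using assms base_gt_1 by (intro psi_mono divide_right_mono) auto
  then show "e k * psi (s / \<nu>^k) \<le> e k * psi (t / \<nu>^k)"
    using e_pos[of k] by simp
qed

lemma psi_sum_scale_le:
  fixes a t :: real
  assumes "1 \<le> a"
  shows "psi_sum \<nu> e (a * t) \<le> a^6 * psi_sum \<nu> e t"
proof -
  have "psi_sum \<nu> e (a * t) \<le> (\<Sum>k. a^6 * (e k * psi (t / \<nu>^k)))"
    unfolding psi_sum_real
  proof (intro suminf_le summable_mult summable_psi_terms_real)
    fix k
    have "psi (a * (t / \<nu>^k)) \<le> a^6 * psi (t / \<nu>^k)"
      using assms by (rule psi_scale_le)
    then show "e k * psi (a * t / \<nu>^k) \<le> a^6 * (e k * psi (t / \<nu>^k))"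
      using e_pos[of k] by (simp add: mult_left_mono algebra_simps)
  qed
  also have "\<dots> = a^6 * psi_sum \<nu> e t"
    unfolding psi_sum_real using summable_psi_terms_real[of t] by (rule suminf_mult)
  finally show ?thesis .
qed

lemma psi_sum_ge: "\<nu>^j \<le> (t::real) \<Longrightarrow> e j / 8 \<le> psi_sum \<nu> e t"
proof -
  assume t: "\<nu>^j \<le> t"
  have "1/8 \<le> psi (t / \<nu>^j)"
    using t base_gt_1 by (intro psi_ge_one_eighth) simp
  then have "e j / 8 \<le> e j * psi (t / \<nu>^j)"
    using e_pos[of j] by (simp add: mult_left_mono)
  then show ?thesis
    using psi_term_le_psi_sum[of j t] by linarith
qed

lemma psi_term_le_geometric:
  fixes t M :: real
  assumes t: "0 \<le> t" "t \<le> \<nu>^Suc j"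
    and below: "\<And>k. k \<le> j \<Longrightarrow> e k * \<nu>^(j - k) \<le> M"
    and above: "\<And>k. j < k \<Longrightarrow> e k \<le> M * \<nu>^(4 * (k - j))"
  shows "e k * psi (t / \<nu>^k) \<le> M * \<nu>^6 * (1/\<nu>)^((j - k) + (k - j))"
proof -
  have \<nu>: "1 < \<nu>" by (rule base_gt_1)
  have M: "0 \<le> M"
    using below[of j] e_pos[of j] by simp
  show ?thesis
  proof (cases "k \<le> j")
    case True
    have "e k * psi (t / \<nu>^k) \<le> e k"
      using e_pos[of k] psi_le_one by (simp add: mult_left_le)
    also have "\<dots> \<le> M / \<nu>^(j - k)"
      using below[OF True] \<nu> by (simp add: field_simps)
    also have "\<dots> \<le> M * \<nu>^6 / \<nu>^(j - k)"
      using M \<nu> by (intro divide_right_mono) (auto simp: mult_le_cancel_left1 one_le_power)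
    finally show ?thesis
      using True by (simp add: power_one_over)
  next
    case False
    then obtain d where k: "k = j + d"
      using le_Suc_ex[of j k] by auto
    have "t / \<nu>^k \<le> \<nu> / \<nu>^d"
      using t \<nu> by (simp add: k power_add field_simps)
    then have ratio: "(t / \<nu>^k)^6 \<le> (\<nu> / \<nu>^d)^6"
      using t \<nu> by (intro power_mono) auto
    have "e k * psi (t / \<nu>^k) \<le> e k * (t / \<nu>^k)^6"
      using e_pos[of k] by (intro mult_left_mono psi_le_power6) simp
    also have "\<dots> \<le> M * \<nu>^(4*d) * (\<nu> / \<nu>^d)^6"
    proof (rule mult_mono[OF _ ratio])
      show "e k \<le> M * \<nu>^(4*d)"
        using above[of k] False by (simp add: k)
    qed (use M \<nu> t in auto)
    also have "\<dots> = M * \<nu>^6 / \<nu>^(2*d)"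
    proof -
      have "\<nu>^(6*d) = \<nu>^(4*d) * \<nu>^(2*d)" by (simp flip: power_add)
      then show ?thesis
        using \<nu> by (simp add: power_divide field_simps flip: power_mult)
    qed
    also have "\<dots> \<le> M * \<nu>^6 / \<nu>^d"
      using M \<nu> by (intro divide_left_mono power_increasing mult_pos_pos) auto
    finally show ?thesis
      using False by (simp add: k power_one_over)
  qed
qed

lemma psi_sum_le:
  fixes t M :: real
  assumes t: "0 \<le> t" "t \<le> \<nu>^Suc j"
    and below: "\<And>k. k \<le> j \<Longrightarrow> e k * \<nu>^(j - k) \<le> M"
    and above: "\<And>k. j < k \<Longrightarrow> e k \<le> M * \<nu>^(4 * (k - j))"
  shows "psi_sum \<nu> e t \<le> 2 * \<nu>^6 / (1 - 1/\<nu>) * M"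
  unfolding psi_sum_real
proof (intro suminf_le_const summable_psi_terms_real)
  fix N
  have M: "0 \<le> M"
    using below[of j] e_pos[of j] by simp
  have "(\<Sum>k<N. e k * psi (t / \<nu>^k)) \<le> M * \<nu>^6 * (\<Sum>k<N. (1/\<nu>)^((j - k) + (k - j)))"
    unfolding sum_distrib_left using assms by (intro sum_mono psi_term_le_geometric)
  also have "\<dots> \<le> M * \<nu>^6 * (2 / (1 - 1/\<nu>))"
    using M base_gt_1 by (intro mult_left_mono sum_two_sided_geometric_le) auto
  finally show "(\<Sum>k<N. e k * psi (t / \<nu>^k)) \<le> 2 * \<nu>^6 / (1 - 1/\<nu>) * M"
    by (simp add: field_simps)
qed

end

definition damping_sum :: "real \<Rightarrow> (nat \<Rightarrow> real) \<Rightarrow> (nat \<Rightarrow> nat) \<Rightarrow> 'a::{real_normed_field,banach} \<Rightarrow> 'a" where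
  "damping_sum \<nu> g n w = (\<Sum>m. of_real (g m) * (w / of_real (\<nu>^m)) ^ n m)"

locale damping_series =
  fixes \<nu> :: real and g :: "nat \<Rightarrow> real" and n :: "nat \<Rightarrow> nat"
  assumes base_gt_1: "\<nu> > 1" and g_nonneg: "\<And>m. 0 \<le> g m"
    and g_small: "\<And>m. g m * (1/2) ^ n m \<le> (1/2) ^ m"
begin

lemma norm_damping_term_le:
  fixes w :: "'a::real_normed_field"
  assumes "2 * norm w \<le> \<nu>^m"
  shows "norm (of_real (g m) * (w / of_real (\<nu>^m)) ^ n m) \<le> (1/2) ^ m"
proof -
  have "norm (w / of_real (\<nu>^m)) \<le> 1/2"
    using assms base_gt_1 by (simp add: norm_divide norm_power field_simps)
  then have "norm (of_real (g m) * (w / of_real (\<nu>^m)) ^ n m) \<le> g m * (1/2) ^ n m"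
    using g_nonneg[of m] by (simp add: norm_mult norm_power mult_left_mono power_mono)
  also have "\<dots> \<le> (1/2) ^ m"
    by (rule g_small)
  finally show ?thesis .
qed

lemma damping_terms_dominated:
  "\<exists>M. summable M \<and> (\<forall>\<^sub>F m in sequentially.
     \<forall>w::'a::real_normed_field. norm w \<le> R \<longrightarrow> norm (of_real (g m) * (w / of_real (\<nu>^m)) ^ n m) \<le> M m)"
proof (intro exI conjI)
  show "summable (\<lambda>m. (1/2::real) ^ m)"
    by (rule summable_geometric) simp
  show "\<forall>\<^sub>F m in sequentially. \<forall>w::'a. norm w \<le> R \<longrightarrow>
          norm (of_real (g m) * (w / of_real (\<nu>^m)) ^ n m) \<le> (1/2) ^ m"
    using eventually_le_power[OF base_gt_1, of "2 * R"]
    by eventually_elim (intro allI impI norm_damping_term_le, linarith)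
qed

lemma summable_damping_terms:
  "summable (\<lambda>m. of_real (g m) * (w / of_real (\<nu>^m)) ^ n m :: 'a::{real_normed_field,banach})"
proof -
  obtain M where M: "summable M"
    "\<forall>\<^sub>F m in sequentially. \<forall>v::'a. norm v \<le> norm w \<longrightarrow> norm (of_real (g m) * (v / of_real (\<nu>^m)) ^ n m) \<le> M m"
    using damping_terms_dominated by blast
  from M(2) have "\<forall>\<^sub>F m in sequentially. norm (of_real (g m) * (w / of_real (\<nu>^m)) ^ n m) \<le> M m"
    by eventually_elim blast
  then show ?thesis
    using M(1) by (rule summable_comparison_test_ev)
qed

lemma damping_sum_holomorphic: "damping_sum \<nu> g n holomorphic_on UNIV"
proof -
  have "(\<lambda>z. \<Sum>m. of_real (g m) * (z / of_real (\<nu>^m)) ^ n m) holomorphic_on UNIV"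
    using base_gt_1 by (intro holomorphic_on_suminf damping_terms_dominated) (auto intro!: holomorphic_intros)
  then show ?thesis
    by (simp add: damping_sum_def[abs_def])
qed

lemma damping_sum_of_real: "damping_sum \<nu> g n (complex_of_real x) = of_real (damping_sum \<nu> g n x)"
  unfolding damping_sum_def
  using suminf_of_real[OF summable_damping_terms[of x], where 'a=complex] by simp

lemma damping_sum_real: "damping_sum \<nu> g n (x::real) = (\<Sum>m. g m * (x / \<nu>^m) ^ n m)"
  by (simp add: damping_sum_def)

lemma summable_damping_terms_real: "summable (\<lambda>m. g m * (x / \<nu>^m) ^ n m)"
  using summable_damping_terms[of x] by simp

lemma damping_sum_nonneg: "0 \<le> (x::real) \<Longrightarrow> 0 \<le> damping_sum \<nu> g n x"
  unfolding damping_sum_real using g_nonneg base_gt_1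
  by (intro suminf_nonneg summable_damping_terms_real) simp

lemma damping_sum_mono:
  fixes x y :: real
  assumes "0 \<le> x" "x \<le> y"
  shows "damping_sum \<nu> g n x \<le> damping_sum \<nu> g n y"
  unfolding damping_sum_real
proof (intro suminf_le summable_damping_terms_real)
  fix m
  have "(x / \<nu>^m) ^ n m \<le> (y / \<nu>^m) ^ n m"
    using assms base_gt_1 by (intro power_mono divide_right_mono) auto
  then show "g m * (x / \<nu>^m) ^ n m \<le> g m * (y / \<nu>^m) ^ n m"
    using g_nonneg[of m] by (rule mult_left_mono)
qed

lemma damping_sum_ge:
  fixes x :: real
  assumes "\<nu>^m \<le> x"
  shows "g m \<le> damping_sum \<nu> g n x"
proof -
  have "1 \<le> (x / \<nu>^m) ^ n m"
    using assms base_gt_1 by (intro one_le_power) simp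
  then have "g m \<le> g m * (x / \<nu>^m) ^ n m"
    using g_nonneg[of m] by (simp add: mult_le_cancel_left1)
  also have "\<dots> \<le> damping_sum \<nu> g n x"
    unfolding damping_sum_real using sum_le_suminf[OF summable_damping_terms_real, of "{m}"] g_nonneg assms base_gt_1
    by (simp add: order_trans[OF _ assms])
  finally show ?thesis .
qed

lemma damping_sum_le_2:
  fixes x :: real
  assumes "0 \<le> x" "x \<le> 1/2"
  shows "damping_sum \<nu> g n x \<le> 2"
proof -
  have "g m * (x / \<nu>^m) ^ n m \<le> (1/2) ^ m" for m
  proof -
    have "1 \<le> \<nu>^m"
      using base_gt_1 by (intro one_le_power) simp
    then have "2 * norm x \<le> \<nu>^m"
      using assms by simp
    then show ?thesis
      using norm_damping_term_le[of x m] g_nonneg[of m] assms base_gt_1 by simp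
  qed
  then have "damping_sum \<nu> g n x \<le> (\<Sum>m. (1/2::real) ^ m)"
    unfolding damping_sum_real by (intro suminf_le summable_damping_terms_real summable_geometric) auto
  also have "\<dots> = 2"
    using suminf_geometric[of "1/2::real"] by simp
  finally show ?thesis .
qed

end

locale damped_psi_series = psi_series \<nu> e C + damping_series \<nu> g n
  for \<nu> :: real and e :: "nat \<Rightarrow> real" and C :: real and g :: "nat \<Rightarrow> real" and n :: "nat \<Rightarrow> nat"
begin

definition damped_psi :: "real \<Rightarrow> real" where
  "damped_psi t = exp (- damping_sum \<nu> g n (1/t)) * psi_sum \<nu> e t"

lemma damped_psi_smooth: "smooth_on {0<..} damped_psi"
proof -
  define F where "F z = exp (- damping_sum \<nu> g n (1/z)) * psi_sum \<nu> e z" for z :: complex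
  have "(damping_sum \<nu> g n \<circ> (\<lambda>z. 1/z)) holomorphic_on {z. 0 < Re z}"
    by (intro holomorphic_on_compose_gen[OF _ damping_sum_holomorphic]) (auto intro!: holomorphic_intros)
  then have "F holomorphic_on {z. 0 < Re z}"
    unfolding F_def o_def by (intro holomorphic_intros psi_sum_holomorphic)
  then have "smooth_on {0<..} (\<lambda>t. Re (F (of_real t)))"
    by (rule smooth_on_Re_of_real_holomorphic) (auto simp: open_halfspace_Re_gt)
  moreover have "Re (F (of_real t)) = damped_psi t" for t
    using damping_sum_of_real[of "1/t"] psi_sum_of_real[of t]
    by (simp add: F_def damped_psi_def Re_exp)
  ultimately show ?thesis by simp
qed

lemma damped_psi_pos: "0 < t \<Longrightarrow> 0 < damped_psi t"
  using psi_sum_pos[of t] by (simp add: damped_psi_def)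

lemma damped_psi_le_psi_sum: "0 < t \<Longrightarrow> damped_psi t \<le> psi_sum \<nu> e t"
  using damping_sum_nonneg[of "1/t"] psi_sum_nonneg[of t]
  by (simp add: damped_psi_def mult_left_le_one_le)

lemma damped_psi_mono:
  assumes "0 < s" "s \<le> t"
  shows "damped_psi s \<le> damped_psi t"
proof -
  have "damping_sum \<nu> g n (1/t) \<le> damping_sum \<nu> g n (1/s)"
    using assms by (intro damping_sum_mono) (auto simp: field_simps)
  moreover have "psi_sum \<nu> e s \<le> psi_sum \<nu> e t"
    using assms by (intro psi_sum_mono) auto
  ultimately show ?thesis
    unfolding damped_psi_def using psi_sum_nonneg[of s] by (intro mult_mono) auto
qed

lemma damped_psi_scale_le:
  assumes \<alpha>: "0 < \<alpha>" and t: "2 \<le> t"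
  shows "damped_psi (\<alpha> * t) \<le> exp 2 * max 1 (\<alpha>^6) * damped_psi t"
proof (cases "\<alpha> \<le> 1")
  case True
  then have "damped_psi (\<alpha> * t) \<le> damped_psi t"
    using \<alpha> t by (intro damped_psi_mono) (auto simp: mult_le_cancel_right1)
  also have "\<dots> \<le> exp 2 * max 1 (\<alpha>^6) * damped_psi t"
  proof -
    have "1 \<le> exp (2::real) * max 1 (\<alpha>^6)"
      using mult_mono[of 1 "exp 2" 1 "max 1 (\<alpha>^6)"] by simp
    then show ?thesis
      using damped_psi_pos[of t] t by (simp add: mult_le_cancel_right1)
  qed
  finally show ?thesis .
next
  case False
  have "exp (-2) \<le> exp (- damping_sum \<nu> g n (1/t))"
    using damping_sum_le_2[of "1/t"] t by simp
  then have "exp (-2) * psi_sum \<nu> e t \<le> damped_psi t"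
    unfolding damped_psi_def using psi_sum_nonneg[of t] by (rule mult_right_mono)
  then have P_le: "psi_sum \<nu> e t \<le> exp 2 * damped_psi t"
    by (simp add: exp_minus field_simps)
  have "damped_psi (\<alpha> * t) \<le> \<alpha>^6 * psi_sum \<nu> e t"
    using damped_psi_le_psi_sum[of "\<alpha> * t"] psi_sum_scale_le[of \<alpha> t] \<alpha> t False by simp
  also have "\<dots> \<le> \<alpha>^6 * (exp 2 * damped_psi t)"
    using P_le by (simp add: mult_left_mono)
  also have "\<dots> \<le> exp 2 * max 1 (\<alpha>^6) * damped_psi t"
    using damped_psi_pos[of t] t by (simp add: mult_right_mono)
  finally show ?thesis .
qed

lemma damped_psi_le:
  assumes far: "\<And>t. 1 \<le> t \<Longrightarrow> psi_sum \<nu> e t \<le> B t"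
    and near: "\<And>m t. 1 / \<nu>^Suc m \<le> t \<Longrightarrow> t \<le> 1 / \<nu>^m \<Longrightarrow> exp (- g m) * psi_sum \<nu> e 1 \<le> B t"
    and t: "0 < t"
  shows "damped_psi t \<le> B t"
proof (cases "1 \<le> t")
  case True
  then show ?thesis
    using damped_psi_le_psi_sum[OF t] far[OF True] by linarith
next
  case False
  then have "1 \<le> 1/t"
    using t by simp
  then obtain m where m: "\<nu>^m \<le> 1/t" "1/t \<le> \<nu>^Suc m"
    using geometric_block_exists[OF base_gt_1] by blast
  have "g m \<le> damping_sum \<nu> g n (1/t)"
    using m(1) by (rule damping_sum_ge)
  moreover have "psi_sum \<nu> e t \<le> psi_sum \<nu> e 1"
    using False t by (intro psi_sum_mono) auto
  ultimately have "damped_psi t \<le> exp (- g m) * psi_sum \<nu> e 1"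
    unfolding damped_psi_def using psi_sum_nonneg[of t] by (intro mult_mono) auto
  also have "\<dots> \<le> B t"
    using m t base_gt_1 by (intro near) (auto simp: field_simps)
  finally show ?thesis .
qed

lemma set_integrable_damped_psi:
  assumes "summable (\<lambda>k. (e k * \<nu>^k) powr (-1/4) * \<nu>^k)"
  shows "set_integrable lborel {1..} (\<lambda>t. (damped_psi t * t) powr (-1/4))"
proof -
  define K :: real where "K = (exp (- damping_sum \<nu> g n 1) / 8) powr (-1/4)"
  have "continuous_on {1..} damped_psi"
  proof (intro continuous_at_imp_continuous_on ballI)
    fix t :: real assume "t \<in> {1..}"
    then have "t \<in> {0<..}" by simp
    then have "(deriv ^^ 0) damped_psi differentiable (at t)"
      using damped_psi_smooth unfolding smooth_on_def by blast
    then show "isCont damped_psi t"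
      by (simp add: differentiable_imp_continuous_within)
  qed
  moreover have "damped_psi t \<noteq> 0" if "1 \<le> t" for t
    using that damped_psi_pos[of t] by simp
  ultimately have cont: "continuous_on {1..} (\<lambda>t. (damped_psi t * t) powr (-1/4))"
    by (intro continuous_intros) auto
  have bound: "(damped_psi x * x) powr (-1/4) \<le> K * (e j * \<nu>^j) powr (-1/4)"
    if x: "\<nu>^j \<le> x" "x \<le> \<nu>^Suc j" for j x
  proof -
    have "1 \<le> \<nu>^j" using base_gt_1 by (intro one_le_power) simp
    then have x1: "1 \<le> x" using x by simp
    have "damping_sum \<nu> g n (1/x) \<le> damping_sum \<nu> g n 1"
      using x1 by (intro damping_sum_mono) auto
    then have "exp (- damping_sum \<nu> g n 1) * (e j / 8) \<le> damped_psi x"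
      unfolding damped_psi_def using psi_sum_ge[OF x(1)] e_pos[of j] by (intro mult_mono) auto
    then have "exp (- damping_sum \<nu> g n 1) * (e j / 8) * \<nu>^j \<le> damped_psi x * x"
      using x(1) damped_psi_pos[of x] x1 base_gt_1 by (intro mult_mono) auto
    then have "exp (- damping_sum \<nu> g n 1) / 8 * (e j * \<nu>^j) \<le> damped_psi x * x"
      by (simp add: field_simps)
    then have "(damped_psi x * x) powr (-1/4) \<le> (exp (- damping_sum \<nu> g n 1) / 8 * (e j * \<nu>^j)) powr (-1/4)"
      using e_pos[of j] base_gt_1 by (intro powr_mono2') auto
    then show ?thesis
      by (simp only: K_def powr_mult[of "exp (- damping_sum \<nu> g n 1) / 8"])
  qed
  show ?thesis
  proof (rule set_integrable_of_block_bounds[OF base_gt_1 cont _ bound])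
    show "summable (\<lambda>j. \<nu>^j * (K * (e j * \<nu>^j) powr (-1/4)))"
      using summable_mult[OF assms, of K] by (simp add: mult_ac)
  qed auto
qed

end

lemma eta_block_minorant:
  fixes \<nu> :: real and H :: "real \<Rightarrow> real"
  assumes \<nu>: "\<nu> > 1" and H: "\<forall>t>0. H t > 0" and eta: "\<forall>t>0. eta (\<nu>^2) H t > 0"
    and int: "set_integrable lborel {1..} (\<lambda>t. (eta (\<nu>^2) H t * t) powr (-1/4))"
  obtains L where "\<And>j. L j > 0" "\<And>j t. \<nu>^j \<le> t \<Longrightarrow> t \<le> \<nu>^Suc j \<Longrightarrow> L j \<le> H t"
    "summable (\<lambda>j. (L j * \<nu>^j) powr (-1/4) * \<nu>^j)"
proof -
  obtain s where s: "\<And>k. \<nu>^k \<le> s k" "\<And>k. s k \<le> \<nu>^Suc k"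
    and summable: "summable (\<lambda>k. \<nu>^k * (eta (\<nu>^2) H (s k) * s k) powr (-1/4))"
    using summable_block_samples[OF \<nu> int] by auto
  have s_pos: "0 < s k" for k
    using \<nu> by (intro less_le_trans[OF _ s(1)]) simp
  define L where "L k = eta (\<nu>^2) H (s k)" for k
  have L_pos: "0 < L k" for k
    using eta s_pos by (simp add: L_def)
  have "L j \<le> H t" if "\<nu>^j \<le> t" "t \<le> \<nu>^Suc j" for j t
    unfolding L_def using that s[of j] \<nu>
    by (intro eta_le_on_block[OF \<nu> H, of "\<nu>^j"]) (auto simp: mult.commute)
  moreover have "summable (\<lambda>j. (L j * \<nu>^j) powr (-1/4) * \<nu>^j)"
  proof (rule summable_comparison_test'[OF summable_mult[OF summable, of "\<nu> powr (1/4)"]])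
    fix k :: nat
    have "L k * s k / \<nu> \<le> L k * \<nu>^k"
      using s(2)[of k] L_pos[of k] \<nu> by (simp add: field_simps)
    then have "(L k * \<nu>^k) powr (-1/4) \<le> (L k * s k / \<nu>) powr (-1/4)"
      using L_pos[of k] s_pos[of k] \<nu> by (intro powr_mono2') auto
    also have "\<dots> = \<nu> powr (1/4) * (L k * s k) powr (-1/4)"
      using \<nu> by (simp add: powr_divide powr_minus_divide)
    finally show "norm ((L k * \<nu>^k) powr (-1/4) * \<nu>^k) \<le> \<nu> powr (1/4) * (\<nu>^k * (eta (\<nu>^2) H (s k) * s k) powr (-1/4))"
      using \<nu> by (simp add: L_def mult_right_mono mult_ac)
  qed
  ultimately show ?thesis
    using that L_pos by blast
qed

lemma psi_series_below_blocks:
  fixes \<nu> :: real and L :: "nat \<Rightarrow> real"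
  assumes \<nu>: "\<nu> > 1" and L: "\<And>j. L j > 0"
    and summable: "summable (\<lambda>j. (L j * \<nu>^j) powr (-1/4) * \<nu>^j)"
  obtains e C where "psi_series \<nu> e C" "\<And>j t. 0 \<le> t \<Longrightarrow> t \<le> \<nu>^Suc j \<Longrightarrow> psi_sum \<nu> e t \<le> L j"
    "summable (\<lambda>k. (e k * \<nu>^k) powr (-1/4) * \<nu>^k)"
proof -
  define \<kappa> where "\<kappa> = (1 - 1/\<nu>) / (2 * \<nu>^6)"
  have \<kappa>: "0 < \<kappa>" using \<nu> by (simp add: \<kappa>_def)
  have "summable (\<lambda>j. (\<kappa> * L j * \<nu>^j) powr (-1/4) * \<nu>^j)"
    using summable_mult[OF summable, of "\<kappa> powr (-1/4)"] by (simp add: powr_mult mult_ac)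
  then obtain e where e_pos: "\<And>k. e k > 0"
    and below: "\<And>k j. k \<le> j \<Longrightarrow> e k * \<nu>^(j - k) \<le> \<kappa> * L j"
    and above: "\<And>k j. j < k \<Longrightarrow> e k \<le> \<kappa> * L j * \<nu>^(4 * (k - j))"
    and e_summable: "summable (\<lambda>k. (e k * \<nu>^k) powr (-1/4) * \<nu>^k)"
    using regular_minorant_exists[OF \<nu>, of "\<lambda>j. \<kappa> * L j"] \<kappa> L by (auto simp: mult.assoc)
  have "e k \<le> \<kappa> * L 0 * \<nu>^(4*k)" for k
    using below[of 0 0] above[of 0 k] by (cases "k = 0") auto
  then interpret psi_series \<nu> e "\<kappa> * L 0"
    using \<nu> e_pos by unfold_locales auto
  have "psi_sum \<nu> e t \<le> L j" if "0 \<le> t" "t \<le> \<nu>^Suc j" for j t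
  proof -
    have "psi_sum \<nu> e t \<le> 2 * \<nu>^6 / (1 - 1/\<nu>) * (\<kappa> * L j)"
      using that below above by (intro psi_sum_le) auto
    also have "\<dots> = L j"
      using \<nu> by (simp add: \<kappa>_def field_simps)
    finally show ?thesis .
  qed
  then show ?thesis
    using that psi_series_axioms e_summable by blast
qed

lemma damping_series_exists:
  fixes \<nu> c :: real and b :: "nat \<Rightarrow> real"
  assumes \<nu>: "\<nu> > 1" and c: "0 < c" and b: "\<And>m. 0 < b m"
  obtains g n where "damping_series \<nu> g n" "\<And>m. exp (- g m) * c \<le> b m"
proof -
  define g where "g m = max 0 (ln (c / b m))" for m
  have "\<exists>k. g m * (1/2)^k \<le> (1/2::real)^m" for m
  proof -
    have "(\<lambda>k. g m * (1/2::real)^k) \<longlonglongrightarrow> 0"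
      by (intro tendsto_mult_right_zero LIMSEQ_power_zero) simp
    then have "\<forall>\<^sub>F k in sequentially. g m * (1/2)^k < (1/2::real)^m"
      by (rule order_tendstoD) simp
    then show ?thesis
      by (auto simp: eventually_sequentially intro: less_imp_le)
  qed
  then obtain n where "\<And>m. g m * (1/2)^(n m) \<le> (1/2::real)^m"
    by metis
  then have "damping_series \<nu> g n"
    using \<nu> by unfold_locales (auto simp: g_def)
  moreover have "exp (- g m) * c \<le> b m" for m
  proof -
    have "exp (- g m) \<le> exp (- ln (c / b m))"
      by (simp add: g_def)
    also have "\<dots> = b m / c"
      using b[of m] c by (simp add: exp_diff ln_div)
    finally show ?thesis
      using c by (simp add: field_simps)
  qed
  ultimately show ?thesis using that by blast
qed

lemma smooth_minorant_exists:
  fixes \<mu> :: real and H :: "real \<Rightarrow> real"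
  assumes \<mu>: "\<mu> > 1" and H: "\<forall>t>0. H t > 0" and eta: "\<forall>t>0. eta \<mu> H t > 0"
    and int: "set_integrable lborel {1..} (\<lambda>t. (eta \<mu> H t * t) powr (-1/4))"
  obtains h where "smooth_on {0<..} h" "\<And>t. 0 < t \<Longrightarrow> 0 < h t" "\<And>t. 0 < t \<Longrightarrow> h t \<le> H t"
    "\<And>s t. 0 < s \<Longrightarrow> s \<le> t \<Longrightarrow> h s \<le> h t"
    "\<And>\<alpha> t. 0 < \<alpha> \<Longrightarrow> 2 \<le> t \<Longrightarrow> h (\<alpha> * t) \<le> exp 2 * max 1 (\<alpha>^6) * h t"
    "set_integrable lborel {1..} (\<lambda>t. (h t * t) powr (-1/4))"
proof -
  define \<nu> where "\<nu> = sqrt \<mu>"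
  have \<nu>: "\<nu> > 1" and \<mu>_eq: "\<mu> = \<nu>^2"
    using \<mu> by (auto simp: \<nu>_def)
  obtain L where L_pos: "\<And>j. L j > 0" and L_le_H: "\<And>j t. \<nu>^j \<le> t \<Longrightarrow> t \<le> \<nu>^Suc j \<Longrightarrow> L j \<le> H t"
    and L_summable: "summable (\<lambda>j. (L j * \<nu>^j) powr (-1/4) * \<nu>^j)"
    using eta_block_minorant[OF \<nu> H] eta int unfolding \<mu>_eq by blast
  obtain e C where "psi_series \<nu> e C" and psi_sum_le_L: "\<And>j t. 0 \<le> t \<Longrightarrow> t \<le> \<nu>^Suc j \<Longrightarrow> psi_sum \<nu> e t \<le> L j"
    and e_summable: "summable (\<lambda>k. (e k * \<nu>^k) powr (-1/4) * \<nu>^k)"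
    using psi_series_below_blocks[OF \<nu> L_pos L_summable] by blast
  interpret psi_series \<nu> e C by fact
  define L0 where "L0 m = eta \<mu> H (1 / \<nu>^m)" for m
  have L0_pos: "0 < L0 m" for m
    using eta \<nu> by (simp add: L0_def)
  obtain g n where "damping_series \<nu> g n" and g: "\<And>m. exp (- g m) * psi_sum \<nu> e 1 \<le> L0 m"
    using damping_series_exists[OF \<nu> psi_sum_pos[of 1], of L0] L0_pos by auto
  interpret damped_psi_series \<nu> e C g n
    by (intro damped_psi_series.intro psi_series_axioms \<open>damping_series \<nu> g n\<close>)
  have "damped_psi t \<le> H t" if "0 < t" for t
  proof (rule damped_psi_le[OF _ _ that])
    fix t :: real assume "1 \<le> t"
    then obtain j where "\<nu>^j \<le> t" "t \<le> \<nu>^Suc j"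
      using geometric_block_exists[OF \<nu>] by blast
    then show "psi_sum \<nu> e t \<le> H t"
      using psi_sum_le_L[of t j] L_le_H[of j t] \<open>1 \<le> t\<close> by simp
  next
    fix m t assume "1 / \<nu>^Suc m \<le> t" "t \<le> 1 / \<nu>^m"
    then have "L0 m \<le> H t"
      unfolding L0_def \<mu>_eq using \<nu> by (intro eta_le_on_block[OF \<nu> H, of "1 / \<nu>^Suc m"]) auto
    then show "exp (- g m) * psi_sum \<nu> e 1 \<le> H t"
      using g[of m] by linarith
  qed
  then show ?thesis
    using that damped_psi_smooth damped_psi_pos damped_psi_mono damped_psi_scale_le
      set_integrable_damped_psi[OF e_summable] by blast
qed

theorem lemma5:
  fixes \<mu> :: real
  assumes "\<mu> > 1"
  shows "\<exists>\<beta> :: real \<Rightarrow> real. (\<forall>\<alpha>>0. \<beta> \<alpha> > 0) \<and>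
    (\<forall>H :: real \<Rightarrow> real.
       H \<in> borel_measurable (restrict_space lborel {0<..}) \<longrightarrow>
       (\<forall>t>0. H t > 0) \<longrightarrow>
       (\<forall>t>0. eta \<mu> H t > 0) \<longrightarrow>
       set_integrable lborel {1..} (\<lambda>t. (eta \<mu> H t * t) powr (-1/4)) \<longrightarrow>
       (\<exists>h :: real \<Rightarrow> real.
          smooth_on {0<..} h \<and>
          (\<forall>t>0. h t > 0) \<and>
          (\<forall>t>0. h t \<le> H t) \<and>
          (\<forall>t1 t2. 0 < t1 \<and> t1 \<le> t2 \<longrightarrow> h t1 \<le> h t2) \<and>
          (\<forall>\<alpha>>0. \<forall>t\<ge>2. h (\<alpha> * t) \<le> \<beta> \<alpha> * h t) \<and>
          set_integrable lborel {1..} (\<lambda>t. (h t * t) powr (-1/4))))"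
proof (rule exI[of _ "\<lambda>\<alpha>. exp 2 * max 1 (\<alpha>^6)"], intro conjI allI impI)
  show "0 < exp 2 * max 1 (\<alpha>^6)" for \<alpha> :: real
    by (simp add: less_max_iff_disj)
  fix H :: "real \<Rightarrow> real"
  (* The construction does not need H to be measurable. *)
  assume "H \<in> borel_measurable (restrict_space lborel {0<..})" and H: "\<forall>t>0. H t > 0"
    and eta: "\<forall>t>0. eta \<mu> H t > 0" and int: "set_integrable lborel {1..} (\<lambda>t. (eta \<mu> H t * t) powr (-1/4))"
  obtain h where "smooth_on {0<..} h" "\<And>t. 0 < t \<Longrightarrow> 0 < h t" "\<And>t. 0 < t \<Longrightarrow> h t \<le> H t"
    "\<And>s t. 0 < s \<Longrightarrow> s \<le> t \<Longrightarrow> h s \<le> h t"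
    "\<And>\<alpha> t. 0 < \<alpha> \<Longrightarrow> 2 \<le> t \<Longrightarrow> h (\<alpha> * t) \<le> exp 2 * max 1 (\<alpha>^6) * h t"
    "set_integrable lborel {1..} (\<lambda>t. (h t * t) powr (-1/4))"
    using smooth_minorant_exists[OF assms H eta int] by blast
  then show "\<exists>h. smooth_on {0<..} h \<and> (\<forall>t>0. h t > 0) \<and> (\<forall>t>0. h t \<le> H t) \<and>
      (\<forall>t1 t2. 0 < t1 \<and> t1 \<le> t2 \<longrightarrow> h t1 \<le> h t2) \<and>
      (\<forall>\<alpha>>0. \<forall>t\<ge>2. h (\<alpha> * t) \<le> exp 2 * max 1 (\<alpha>^6) * h t) \<and>
      set_integrable lborel {1..} (\<lambda>t. (h t * t) powr (-1/4))"
    by blast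
qed

end
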